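(* Let $c_r>0$, $c_e>0$, and let $\mu$ be a finite (nonnegative) measure on $\mathbb{R}$. For closed intervals $I,J\subseteq\mathbb{R}$ (range conditions on a fixed indexed attribute), define the merge function $M(I,J)$ to be the interval hull $I\oplus J=[\min(\inf I,\inf J),\max(\sup I,\sup J)]$ if $I\cap J\neq\emptyset$ and $\mu(I\cap J)\,(c_r+c_e)>c_e\,\mu(I\cup J)$, and $M(I,J)=\emptyset$ otherwise. Let $x,y,z$ be closed intervals such that $x\cap y\neq\emptyset$, $M(x,y)=\emptyset$, $M(y,z)\neq\emptyset$ (so the merged candidate $y\oplus z$ exists), and $x\cap z=\emptyset$. Then $M(x,y\oplus z)=\emptyset$.
   Context: Candidate guards are range conditions $a\in[v_1,v_2]$ on an indexed attribute $a$, identified with closed intervals. $\mu(S)$ denotes the estimated number of tuples whose value of $a$ lies in $S$. $c_r$ is the cost of reading a tuple and $c_e$ the cost of evaluating one policy's object conditions on a tuple. The function $M$ decides whether merging two overlapping candidate guards into their interval hull is beneficial, via the condition $\mu(I\cap J)/\mu(I\cup J)>c_e/(c_r+c_e)$ (written multiplicatively above). *)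

theory Defs
  imports "HOL-Analysis.Analysis"
begin

definition ihull :: "real set \<Rightarrow> real set \<Rightarrow> real set" where
  "ihull I J = {min (Inf I) (Inf J) .. max (Sup I) (Sup J)}"

definition merge :: "real measure \<Rightarrow> real \<Rightarrow> real \<Rightarrow> real set \<Rightarrow> real set \<Rightarrow> real set" where
  "merge mu cr ce I J =
     (if I \<inter> J \<noteq> {} \<and> measure mu (I \<inter> J) * (cr + ce) > ce * measure mu (I \<union> J)
      then ihull I J else {})"

end

theory Submission
  imports Defs
begin

text \<open>Two overlapping closed intervals already cover their hull, so merging y with z adds only
  points of z to y. Since x misses z, the overlap of x with the merged candidate is still x \<inter> y,
  while the union with x can only grow; the merge criterion, which already failed for x and y,
  therefore fails for x and the merged candidate as well.\<close>

definition merge_beneficial :: "real measure \<Rightarrow> real \<Rightarrow> real \<Rightarrow> real set \<Rightarrow> real set \<Rightarrow> bool" where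
  "merge_beneficial mu cr ce I J \<longleftrightarrow> measure mu (I \<inter> J) * (cr + ce) > ce * measure mu (I \<union> J)"

lemma merge_eq_if_beneficial:
  "merge mu cr ce I J = (if I \<inter> J \<noteq> {} \<and> merge_beneficial mu cr ce I J then ihull I J else {})"
  by (simp add: merge_def merge_beneficial_def)

lemma ihull_nonempty:
  assumes "I \<noteq> {}" "bdd_below I" "bdd_above I"
  shows "ihull I J \<noteq> {}"
proof -
  obtain i where "i \<in> I"
    using assms(1) by blast
  then have "Inf I \<le> Sup I"
    using assms(2,3) cInf_lower[of i I] cSup_upper[of i I] by linarith
  then show ?thesis
    by (auto simp: ihull_def min_le_iff_disj le_max_iff_disj)
qed

lemma ihull_atLeastAtMost:
  assumes "a \<le> b" "c \<le> d"
  shows "ihull {a..b} {c..d} = {min a c..max b d}"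
  using assms by (simp add: ihull_def)

lemma ihull_eq_Un_if_overlap:
  assumes "{a..b} \<inter> {c..d} \<noteq> {}"
  shows "ihull {a..b} {c..d} = {a..b} \<union> {c..d}"
proof -
  have "a \<le> b" "c \<le> d" "a \<le> d" "c \<le> b"
    using assms by auto
  then show ?thesis
    by (auto simp: ihull_atLeastAtMost)
qed

lemma merge_beneficial_eq_empty_iff:
  assumes "I \<inter> J \<noteq> {}" "ihull I J \<noteq> {}"
  shows "merge mu cr ce I J = {} \<longleftrightarrow> \<not> merge_beneficial mu cr ce I J"
  using assms by (simp add: merge_eq_if_beneficial)

lemma not_merge_beneficial_enlarge:
  assumes "finite_measure mu" "ce \<ge> 0"
    and "I \<inter> J' = I \<inter> J" "J \<subseteq> J'" "I \<union> J' \<in> sets mu"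
    and "\<not> merge_beneficial mu cr ce I J"
  shows "\<not> merge_beneficial mu cr ce I J'"
proof -
  have "measure mu (I \<union> J) \<le> measure mu (I \<union> J')"
    using assms(4,5) by (intro finite_measure.finite_measure_mono[OF assms(1)]) auto
  then have "ce * measure mu (I \<union> J) \<le> ce * measure mu (I \<union> J')"
    using assms(2) by (rule mult_left_mono)
  then show ?thesis
    using assms(3,6) by (simp add: merge_beneficial_def)
qed

theorem corollary1:
  fixes mu :: "real measure" and cr ce :: real
    and x y z :: "real set" and x1 x2 y1 y2 z1 z2 :: real
  assumes "finite_measure mu" and "sets mu = sets borel"
    and "cr > 0" and "ce > 0"
    and "x = {x1..x2}" and "y = {y1..y2}" and "z = {z1..z2}"
    and "x \<inter> y \<noteq> {}"
    and "merge mu cr ce x y = {}"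
    and "merge mu cr ce y z \<noteq> {}"
    and "x \<inter> z = {}"
  shows "merge mu cr ce x (ihull y z) = {}"
proof -
  have "y \<inter> z \<noteq> {}"
    using assms(10) by (auto simp: merge_def split: if_splits)
  then have hull: "ihull y z = y \<union> z"
    using assms(6,7) by (simp add: ihull_eq_Un_if_overlap)
  have "ihull x y \<noteq> {}"
    using assms(5,8) by (intro ihull_nonempty) auto
  then have "\<not> merge_beneficial mu cr ce x y"
    using assms(8,9) merge_beneficial_eq_empty_iff by blast
  moreover have "x \<inter> ihull y z = x \<inter> y"
    using assms(11) hull by blast
  moreover have "x \<union> ihull y z \<in> sets mu"
    using assms(2,5,6,7) hull by simp
  ultimately have "\<not> merge_beneficial mu cr ce x (ihull y z)"
    using not_merge_beneficial_enlarge[OF assms(1), of ce x "ihull y z" y cr] assms(4) hull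
    by auto
  then show ?thesis
    by (simp add: merge_eq_if_beneficial)
qed

end
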